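(* Let $N$ and $M$ be large positive parameters, let $\mathcal{X}$ be any subset of $\{1,2,\ldots,10^M\}$, and let $\Delta=\Delta(N)$ be any function with $\Delta\to\infty$. For a prime $p$, let $J_p$ be the number of solutions of $$x\equiv y\pmod p;\qquad x,y\in\mathcal{X}.$$ Then for $\pi(N)\bigl(1+O(1/\Delta)\bigr)$ primes $p\le N$ we have $$J_p=|\mathcal{X}|+O\!\left(\frac{|\mathcal{X}|^2 M}{\pi(N)\log M}\,\Delta\right).$$
   Context: $\pi(N)$ denotes the number of primes $p\le N$. *)

theory Defs
  imports "HOL-Computational_Algebra.Primes" "HOL-Number_Theory.Cong" Complex_Main
begin

definition prime_pi :: "nat \<Rightarrow> nat" where
  "prime_pi N = card {p. prime p \<and> p \<le> N}"

definition Jcount :: "nat set \<Rightarrow> nat \<Rightarrow> nat" where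
  "Jcount X p = card {(x, y). x \<in> X \<and> y \<in> X \<and> [x = y] (mod p)}"

end

theory Submission
  imports Defs
begin

text \<open>
  Since \<open>J\<^sub>p - |X|\<close> counts the pairs \<open>x \<noteq> y\<close> in \<open>X\<close> with \<open>p\<close> dividing \<open>x - y\<close>, summing over
  the primes \<open>p \<le> N\<close> counts, for each such pair, the prime divisors of \<open>\<bar>x - y\<bar> < 10\<^sup>M\<close>.
  A positive integer below \<open>10\<^sup>M\<close> has \<open>O(M / log M)\<close> distinct prime factors, so the total
  is \<open>O(|X|\<^sup>2 M / log M)\<close>, and by Markov's inequality the excess exceeds \<open>\<Delta>\<close> times its
  mean for at most \<open>\<pi>(N) / \<Delta>\<close> primes.
\<close>

lemma prod_prime_factors_le:
  fixes n :: nat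
  assumes "n > 0"
  shows "\<Prod>(prime_factors n) \<le> n"
proof -
  have "\<Prod>(prime_factors n) \<le> (\<Prod>p\<in>prime_factors n. p ^ multiplicity p n)"
  proof (rule prod_mono)
    fix p assume "p \<in> prime_factors n"
    then have "multiplicity p n > 0" "p > 0"
      by (auto simp: prime_factors_multiplicity prime_gt_0_nat)
    then show "0 \<le> p \<and> p \<le> p ^ multiplicity p n"
      by (simp add: self_le_power)
  qed
  also have "\<dots> = n"
    using assms by (simp add: prod_prime_factors)
  finally show ?thesis .
qed

text \<open>At most \<open>t\<close> elements of \<open>S\<close> lie below \<open>t\<close>; all others contribute a factor \<open>\<ge> t\<close>.\<close>

lemma power_card_diff_le_prod:
  fixes S :: "nat set" and t :: nat
  assumes "finite S" "\<And>x. x \<in> S \<Longrightarrow> x \<ge> 1" "t \<ge> 1"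
  shows "t ^ (card S - t) \<le> \<Prod>S"
proof -
  let ?A = "S \<inter> {..<t}" and ?B = "S - {..<t}"
  have "card ?A \<le> t"
    using card_mono[of "{..<t}" ?A] by auto
  then have "card S - t \<le> card ?B"
    using assms(1) by (metis Diff_Diff_Int card_Diff_subset_Int diff_le_mono2 finite_Diff)
  then have "t ^ (card S - t) \<le> (\<Prod>x\<in>?B. t)"
    using assms(3) by (simp add: power_increasing)
  also have "\<dots> \<le> \<Prod>?B"
    by (rule prod_mono) auto
  also have "\<dots> \<le> \<Prod>?A * \<Prod>?B"
    using assms(2) prod_ge_1[of ?A "\<lambda>x. x"] by simp
  also have "\<dots> = \<Prod>S"
    using assms(1) by (metis Int_Diff_Un Int_Diff_disjoint finite_Int finite_Diff prod.union_disjoint)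
  finally show ?thesis .
qed

lemma le_div_ln_of_mul_ln_le:
  fixes t M :: real
  assumes t: "t \<ge> 1" and M: "M \<ge> 2" and h: "t * ln t \<le> M * ln 10"
  shows "t \<le> 18 * M / ln M"
proof -
  have lnM: "ln M > 0" and sM: "sqrt M > 0"
    using M by simp_all
  have "ln 10 \<le> (9::real)"
    using ln_le_minus_one[of 10] by simp
  then have "M * ln 10 \<le> M * 9"
    using M by (intro mult_left_mono) auto
  with h have tlnt: "t * ln t \<le> 9 * M"
    by linarith
  show ?thesis
  proof (cases "t \<ge> sqrt M")
    case True
    have "ln M / 2 = ln (sqrt M)"
      using M by (simp add: ln_sqrt)
    also have "\<dots> \<le> ln t"
      using True sM t by (subst ln_le_cancel_iff) auto
    finally have "t * (ln M / 2) \<le> t * ln t"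
      using t by (intro mult_left_mono) auto
    with tlnt lnM show ?thesis
      by (simp add: field_simps)
  next
    case False
    have "ln M = 2 * ln (sqrt M)"
      using M by (simp add: ln_sqrt)
    also have "\<dots> \<le> 2 * sqrt M"
      using sM ln_le_minus_one[of "sqrt M"] by simp
    finally have "sqrt M * ln M \<le> sqrt M * (2 * sqrt M)"
      using sM by (intro mult_left_mono) auto
    also have "\<dots> = 2 * M"
      using M by simp
    finally have "sqrt M * ln M \<le> 2 * M" .
    then have "sqrt M \<le> 18 * M / ln M"
      using lnM M by (simp add: field_simps)
    with False show ?thesis
      by simp
  qed
qed

text \<open>With \<open>k = \<omega>(n)\<close> and \<open>t = \<lfloor>k/2\<rfloor>\<close>, the bound \<open>t\<^sup>t \<le> n < 10\<^sup>M\<close> forces \<open>t \<le> 18M / log M\<close>.\<close>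

lemma card_prime_factors_le:
  fixes n M :: nat
  assumes n: "0 < n" "n < 10 ^ M" and M: "M \<ge> 2"
  shows "real (card (prime_factors n)) \<le> 37 * real M / ln (real M)"
proof -
  define k where "k = card (prime_factors n)"
  have "ln (real M) > 0"
    using M by simp
  then have MlnM: "real M / ln (real M) \<ge> 1"
    using ln_le_minus_one[of "real M"] M by (simp add: field_simps)
  show ?thesis
  proof (cases "k \<ge> 2")
    case False
    with MlnM show ?thesis
      by (simp add: k_def)
  next
    case True
    define t where "t = k div 2"
    have t1: "t \<ge> 1"
      using True by (simp add: t_def)
    have "t ^ t \<le> t ^ (k - t)"
      using t1 by (intro power_increasing) (auto simp: t_def)
    also have "\<dots> \<le> \<Prod>(prime_factors n)"
      unfolding k_def using power_card_diff_le_prod[OF _ _ t1] prime_ge_1_nat by auto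
    also have "\<dots> \<le> n"
      using n(1) by (rule prod_prime_factors_le)
    finally have "t ^ t < 10 ^ M"
      using n(2) by simp
    then have "real t ^ t < 10 ^ M"
      by (metis of_nat_less_iff of_nat_numeral of_nat_power)
    then have "ln (real t ^ t) < ln (10 ^ M)"
      using t1 by (subst ln_less_cancel_iff) auto
    then have "real t * ln (real t) \<le> real M * ln 10"
      using t1 by (simp add: ln_realpow)
    then have "real t \<le> 18 * real M / ln (real M)"
      using t1 M by (intro le_div_ln_of_mul_ln_le) auto
    moreover have "real k \<le> 2 * real t + 1"
      by (simp add: t_def)
    ultimately have "real k \<le> 36 * (real M / ln (real M)) + 1"
      by simp
    also have "\<dots> \<le> 37 * real M / ln (real M)"
      using MlnM by simp
    finally show ?thesis
      by (simp add: k_def)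
  qed
qed

definition offdiag_cong_pairs :: "nat set \<Rightarrow> nat \<Rightarrow> (nat \<times> nat) set" where
  "offdiag_cong_pairs X p = {(x, y). x \<in> X \<and> y \<in> X \<and> x \<noteq> y \<and> [x = y] (mod p)}"

lemma Jcount_eq_card_plus_offdiag:
  assumes "finite X"
  shows "Jcount X p = card X + card (offdiag_cong_pairs X p)"
proof -
  let ?I = "(\<lambda>x. (x, x)) ` X"
  have "{(x, y). x \<in> X \<and> y \<in> X \<and> [x = y] (mod p)} = ?I \<union> offdiag_cong_pairs X p"
    by (auto simp: offdiag_cong_pairs_def)
  moreover have "finite (offdiag_cong_pairs X p)"
    by (rule finite_subset[of _ "X \<times> X"]) (auto simp: offdiag_cong_pairs_def assms)
  moreover have "?I \<inter> offdiag_cong_pairs X p = {}"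
    by (auto simp: offdiag_cong_pairs_def)
  moreover have "card ?I = card X"
    by (rule card_image) (auto simp: inj_on_def)
  ultimately show ?thesis
    unfolding Jcount_def using assms by (simp add: card_Un_disjoint)
qed

lemma primes_cong_eq_prime_factors:
  fixes x y :: nat
  assumes "x \<noteq> y"
  shows "{p. prime p \<and> [x = y] (mod p)} = prime_factors (nat \<bar>int x - int y\<bar>)"
  using assms by (simp add: prime_factors_dvd cong_altdef_nat')

lemma card_primes_cong_le:
  fixes x y M :: nat
  assumes "x \<in> {1..10 ^ M}" "y \<in> {1..10 ^ M}" "x \<noteq> y" and M: "M \<ge> 2"
  shows "real (card {p. prime p \<and> [x = y] (mod p)}) \<le> 37 * real M / ln (real M)"
proof -
  \<comment> \<open>an abstract bound \<open>B\<close>, so that the simplifier does not rewrite \<open>10 ^ M\<close> across the coercion\<close>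
  have lt: "nat \<bar>int x - int y\<bar> < B" if "x \<in> {1..B}" "y \<in> {1..B}" for B :: nat
    using that by auto
  have "0 < nat \<bar>int x - int y\<bar>" "nat \<bar>int x - int y\<bar> < 10 ^ M"
    using assms(3) lt[OF assms(1,2)] by auto
  with assms(3) show ?thesis
    by (simp add: primes_cong_eq_prime_factors card_prime_factors_le M)
qed

lemma sum_card_offdiag_cong_pairs_le:
  fixes X :: "nat set" and M N :: nat
  assumes X: "X \<subseteq> {1..10 ^ M}" and M: "M \<ge> 2"
  shows "(\<Sum>p | prime p \<and> p \<le> N. real (card (offdiag_cong_pairs X p)))
           \<le> real (card X) ^ 2 * (37 * real M / ln (real M))"
proof -
  define P where "P = {p. prime p \<and> p \<le> N}"
  define D where "D = {z \<in> X \<times> X. fst z \<noteq> snd z}"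
  define K where "K = 37 * real M / ln (real M)"
  have finX: "finite X"
    using X finite_subset by blast
  have finD: "finite D" and finP: "finite P"
    using finX by (simp_all add: D_def P_def)
  have "offdiag_cong_pairs X p = {z \<in> D. [fst z = snd z] (mod p)}" for p
    by (auto simp: offdiag_cong_pairs_def D_def)
  then have "(\<Sum>p\<in>P. card (offdiag_cong_pairs X p)) = (\<Sum>z\<in>D. card {p \<in> P. [fst z = snd z] (mod p)})"
    using sum.swap_restrict[OF finP finD, of "\<lambda>_ _. 1::nat" "\<lambda>p z. [fst z = snd z] (mod p)"]
    by simp
  then have "(\<Sum>p\<in>P. real (card (offdiag_cong_pairs X p)))
      = (\<Sum>z\<in>D. real (card {p \<in> P. [fst z = snd z] (mod p)}))"
    by (simp only: of_nat_sum[symmetric])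
  also have "\<dots> \<le> (\<Sum>z\<in>D. K)"
  proof (rule sum_mono)
    fix z assume z: "z \<in> D"
    then have "finite {p. prime p \<and> [fst z = snd z] (mod p)}"
      by (simp add: D_def primes_cong_eq_prime_factors)
    then have "card {p \<in> P. [fst z = snd z] (mod p)} \<le> card {p. prime p \<and> [fst z = snd z] (mod p)}"
      by (rule card_mono) (auto simp: P_def)
    also have "real \<dots> \<le> K"
      unfolding K_def using z X M by (intro card_primes_cong_le) (auto simp: D_def)
    finally show "real (card {p \<in> P. [fst z = snd z] (mod p)}) \<le> K"
      by simp
  qed
  also have "\<dots> \<le> real (card X) ^ 2 * K"
  proof -
    have "card D \<le> card (X \<times> X)"
      unfolding D_def using finX by (intro card_mono) auto
    then have "real (card D) \<le> real (card X) ^ 2"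
      by (simp add: card_cartesian_product power2_eq_square flip: of_nat_mult)
    moreover have "K \<ge> 0"
      unfolding K_def using M by simp
    ultimately show ?thesis
      by (simp add: mult_right_mono)
  qed
  finally show ?thesis
    by (simp add: P_def K_def)
qed

lemma card_exceeding_scaled_mean_le:
  fixes f :: "'a \<Rightarrow> real"
  assumes fin: "finite A" and nonneg: "\<And>x. x \<in> A \<Longrightarrow> 0 \<le> f x"
    and sum: "sum f A \<le> S" and c: "c > 0"
  shows "real (card {x \<in> A. S * c / card A < f x}) \<le> card A / c"
proof (cases "{x \<in> A. S * c / card A < f x} = {}")
  case True
  show ?thesis
    unfolding True using c by simp
next
  case False
  define B where "B = {x \<in> A. S * c / card A < f x}"
  from False obtain x0 where x0: "x0 \<in> B"
    by (auto simp: B_def)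
  have "card A > 0"
    using x0 fin by (auto simp: B_def card_gt_0_iff)
  have "f x0 \<le> sum f A"
    using x0 fin nonneg by (intro member_le_sum) (auto simp: B_def)
  moreover have "0 \<le> sum f A"
    using nonneg by (simp add: sum_nonneg)
  ultimately have "S > 0"
    using x0 sum \<open>card A > 0\<close> by (cases "S = 0") (auto simp: B_def)
  have "real (card B) * (S * c / card A) = (\<Sum>x\<in>B. S * c / card A)"
    by simp
  also have "\<dots> \<le> sum f B"
    by (rule sum_mono) (simp add: B_def)
  also have "\<dots> \<le> sum f A"
    using fin nonneg by (intro sum_mono2) (auto simp: B_def)
  finally have "real (card B) * (S * c / card A) \<le> S"
    using sum by linarith
  with \<open>S > 0\<close> \<open>card A > 0\<close> c show ?thesis
    unfolding B_def by (simp add: field_simps)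
qed

lemma card_primes_Jcount_near_card_ge:
  fixes X :: "nat set" and M N :: nat and d :: real
  assumes X: "X \<subseteq> {1..10 ^ M}" and M: "M \<ge> 2" and d: "d > 0"
  shows "real (card {p. prime p \<and> p \<le> N \<and> \<bar>real (Jcount X p) - real (card X)\<bar>
           \<le> 37 * real (card X) ^ 2 * real M * d / (real (prime_pi N) * ln (real M))})
         \<ge> real (prime_pi N) - real (prime_pi N) / d"
proof -
  define P where "P = {p. prime p \<and> p \<le> N}"
  define S where "S = real (card X) ^ 2 * (37 * real M / ln (real M))"
  define off where "off = (\<lambda>p. real (card (offdiag_cong_pairs X p)))"
  define B where "B = {p \<in> P. S * d / card P < off p}"
  have pi: "prime_pi N = card P"
    by (simp add: prime_pi_def P_def)
  have "finite X" "finite P"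
    using X finite_subset by (auto simp: P_def)
  have "\<bar>real (Jcount X p) - real (card X)\<bar> = off p" for p
    using \<open>finite X\<close> by (simp add: off_def Jcount_eq_card_plus_offdiag)
  moreover have "37 * real (card X) ^ 2 * real M * d / (real (prime_pi N) * ln (real M)) = S * d / card P"
    by (simp add: S_def pi mult_ac)
  ultimately have good: "{p. prime p \<and> p \<le> N \<and> \<bar>real (Jcount X p) - real (card X)\<bar>
           \<le> 37 * real (card X) ^ 2 * real M * d / (real (prime_pi N) * ln (real M))} = P - B"
    by (auto simp: P_def B_def)
  have "B \<subseteq> P"
    by (auto simp: B_def)
  then have "real (card (P - B)) = real (card P) - real (card B)"
    using \<open>finite P\<close> by (simp add: card_Diff_subset finite_subset card_mono of_nat_diff)
  moreover have "real (card B) \<le> card P / d"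
    unfolding B_def S_def off_def using \<open>finite P\<close> sum_card_offdiag_cong_pairs_le[OF X M, of N] d
    by (intro card_exceeding_scaled_mean_le) (auto simp: P_def)
  ultimately show ?thesis
    unfolding good unfolding pi by linarith
qed

theorem lemma5:
  "\<exists>C::real. C > 0 \<and> (\<exists>M0::nat. \<forall>\<Delta>::nat \<Rightarrow> real. filterlim \<Delta> at_top at_top \<longrightarrow>
     (\<exists>N0::nat. \<forall>N \<ge> N0. \<forall>M \<ge> M0. \<forall>X. X \<subseteq> {1..10^M} \<longrightarrow>
        real (card {p. prime p \<and> p \<le> N \<and>
            \<bar>real (Jcount X p) - real (card X)\<bar>
              \<le> C * (real (card X))^2 * real M * \<Delta> N / (real (prime_pi N) * ln (real M))})
        \<ge> real (prime_pi N) - C * real (prime_pi N) / \<Delta> N))"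
proof (rule exI[of _ 37], rule conjI, simp, rule exI[of _ 2], intro allI impI)
  fix \<Delta> :: "nat \<Rightarrow> real"
  assume "filterlim \<Delta> at_top at_top"
  then obtain N0 where N0: "\<And>N. N \<ge> N0 \<Longrightarrow> \<Delta> N \<ge> 1"
    by (auto simp: filterlim_at_top eventually_at_top_linorder)
  show "\<exists>N0. \<forall>N\<ge>N0. \<forall>M\<ge>2. \<forall>X. X \<subseteq> {1..10 ^ M} \<longrightarrow>
        real (prime_pi N) - 37 * real (prime_pi N) / \<Delta> N \<le>
        real (card {p. prime p \<and> p \<le> N \<and> \<bar>real (Jcount X p) - real (card X)\<bar>
              \<le> 37 * (real (card X))\<^sup>2 * real M * \<Delta> N / (real (prime_pi N) * ln (real M))})"
  proof (intro exI[of _ N0] allI impI, rule order_trans[OF _ card_primes_Jcount_near_card_ge])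
    fix N :: nat
    assume "N \<ge> N0"
    with N0 show "0 < \<Delta> N"
      by fastforce
    from N0[OF \<open>N \<ge> N0\<close>] show "real (prime_pi N) - 37 * real (prime_pi N) / \<Delta> N
                                \<le> real (prime_pi N) - real (prime_pi N) / \<Delta> N"
      by (simp add: divide_right_mono)
  qed
qed

end
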